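(* $\chi_i'(S_{C_6}^n)=3$ for every positive integer $n$, where $C_6$ is the cycle on $6$ vertices.
   Context: For a graph $H$ with at least one edge, an injective edge $k$-coloring is a map $c:E(H)\to\{1,\dots,k\}$ such that whenever $e_1=xy$, $e_2=yz$, $e_3=zu$ are edges of $H$ with $x,y,z$ distinct and $u\notin\{y,z\}$ (the case $u=x$ being allowed), we have $c(e_1)\ne c(e_3)$. The injective chromatic index $\chi_i'(H)$ is the least $k$ for which such a coloring exists. For a graph $G$ and positive integer $n$, the generalized Sierpiński graph $S_G^n$ has vertex set $V(G)^n$, and $(u_1,\dots,u_n)$, $(v_1,\dots,v_n)$ are adjacent if and only if there is $d\in\{1,\dots,n\}$ with $u_i=v_i$ for $i<d$, $u_dv_d\in E(G)$, and $u_i=v_d$, $v_i=u_d$ for all $i>d$. *)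

theory Defs
  imports Main
begin

text \<open>A (simple) graph is given by a vertex set V and an adjacency relation adj.
  Edges are the unordered pairs {x,y} with x,y in V and adj x y.\<close>

definition inj_edge_coloring ::
  "'a set \<Rightarrow> ('a \<Rightarrow> 'a \<Rightarrow> bool) \<Rightarrow> ('a set \<Rightarrow> nat) \<Rightarrow> nat \<Rightarrow> bool" where
  "inj_edge_coloring V adj c k \<longleftrightarrow>
     (\<forall>x\<in>V. \<forall>y\<in>V. adj x y \<longrightarrow> c {x, y} \<in> {1..k}) \<and>
     (\<forall>x\<in>V. \<forall>y\<in>V. \<forall>z\<in>V. \<forall>u\<in>V.
        adj x y \<and> adj y z \<and> adj z u \<and> x \<noteq> y \<and> y \<noteq> z \<and> x \<noteq> z
        \<and> u \<noteq> y \<and> u \<noteq> z \<longrightarrow> c {x, y} \<noteq> c {z, u})"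

definition inj_chromatic_index :: "'a set \<Rightarrow> ('a \<Rightarrow> 'a \<Rightarrow> bool) \<Rightarrow> nat" where
  "inj_chromatic_index V adj = (LEAST k. \<exists>c. inj_edge_coloring V adj c k)"

definition sierpinski_verts :: "'a set \<Rightarrow> nat \<Rightarrow> 'a list set" where
  "sierpinski_verts V n = {xs. length xs = n \<and> set xs \<subseteq> V}"

definition sierpinski_adj ::
  "('a \<Rightarrow> 'a \<Rightarrow> bool) \<Rightarrow> nat \<Rightarrow> 'a list \<Rightarrow> 'a list \<Rightarrow> bool" where
  "sierpinski_adj adj n u v \<longleftrightarrow>
     (\<exists>d<n. (\<forall>i<d. u ! i = v ! i) \<and> adj (u ! d) (v ! d) \<and>
            (\<forall>i. d < i \<and> i < n \<longrightarrow> u ! i = v ! d \<and> v ! i = u ! d))"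

definition C6_verts :: "nat set" where
  "C6_verts = {0..<6}"

definition C6_adj :: "nat \<Rightarrow> nat \<Rightarrow> bool" where
  "C6_adj a b \<longleftrightarrow> a < 6 \<and> b < 6 \<and> (b = (a + 1) mod 6 \<or> a = (b + 1) mod 6)"

end

theory Submission
  imports Defs
begin

(*
  Every edge of S_{C6}^n is {w a b^m, w b a^m} for an edge ab of C6, uniquely up to swapping a
  and b; it lies inside the copy w of C6 when m = 0 and is a bridge of level m otherwise. Colour
  the bridges of level at least 2 with 2, those of level 1 alternately with 1 and 3 around C6, and
  the edges inside a copy so that the two edges at an odd vertex of C6 share a colour, choosing
  among the six such colourings by the last letter of the copy's address. A path of three edges
  meets at most two copies and one bridge, and a finite check on C6 shows that its end edges always
  get different colours. Three colours are needed because every copy of C6 is a 6-cycle.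
*)

section \<open>Adjacency in generalized Sierpinski graphs\<close>

lemma drop_eq_replicateI:
  assumes "length u = n" "d < n" "\<forall>i. d < i \<and> i < n \<longrightarrow> u ! i = b"
  shows "drop (Suc d) u = replicate (n - Suc d) b"
  using assms by (intro nth_equalityI) auto

lemma sierpinski_adj_iff:
  assumes "length u = n" "length v = n"
  shows "sierpinski_adj adj n u v \<longleftrightarrow>
    (\<exists>w a b m. u = w @ a # replicate m b \<and> v = w @ b # replicate m a \<and> adj a b)"
proof
  assume "sierpinski_adj adj n u v"
  then obtain d where d: "d < n" "\<forall>i<d. u ! i = v ! i" "adj (u ! d) (v ! d)"
    "\<forall>i. d < i \<and> i < n \<longrightarrow> u ! i = v ! d \<and> v ! i = u ! d"
    unfolding sierpinski_adj_def by blast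
  have take_eq: "take d v = take d u"
    using d assms by (intro nth_equalityI) auto
  have "u = take d u @ u ! d # replicate (n - Suc d) (v ! d)"
    using id_take_nth_drop[of d u] drop_eq_replicateI[of u n d "v ! d"] d assms by auto
  moreover have "v = take d u @ v ! d # replicate (n - Suc d) (u ! d)"
    using id_take_nth_drop[of d v] drop_eq_replicateI[of v n d "u ! d"] d assms take_eq by auto
  ultimately show "\<exists>w a b m. u = w @ a # replicate m b \<and> v = w @ b # replicate m a \<and> adj a b"
    using d(3) by blast
next
  assume "\<exists>w a b m. u = w @ a # replicate m b \<and> v = w @ b # replicate m a \<and> adj a b"
  then obtain w a b m where u: "u = w @ a # replicate m b" and v: "v = w @ b # replicate m a"
    and "adj a b" by blast
  show "sierpinski_adj adj n u v"
    unfolding sierpinski_adj_def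
  proof (intro exI[of _ "length w"] conjI allI impI)
    show "length w < n" "adj (u ! length w) (v ! length w)"
      using assms u v \<open>adj a b\<close> by simp_all
    show "u ! i = v ! i" if "i < length w" for i
      using that u v by (simp add: nth_append)
    fix i assume "length w < i \<and> i < n"
    then show "u ! i = v ! length w" "v ! i = u ! length w"
      using u v assms by (auto simp: nth_append nth_Cons split: nat.splits)
  qed
qed

lemma sierpinski_adj_snoc:
  assumes "Suc (length w) = n" "adj a b"
  shows "sierpinski_adj adj n (w @ [a]) (w @ [b])"
proof -
  have len: "length (w @ [a]) = n" "length (w @ [b]) = n"
    using assms(1) by simp_all
  have "w @ [a] = w @ a # replicate 0 b \<and> w @ [b] = w @ b # replicate 0 a \<and> adj a b"
    using assms(2) by simp
  then show ?thesis
    unfolding sierpinski_adj_iff[OF len] by blast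
qed

lemma sierpinski_adjE:
  assumes "sierpinski_adj adj n x y" "x \<in> sierpinski_verts V n" "y \<in> sierpinski_verts V n"
  obtains w a b m where "x = w @ a # replicate m b" "y = w @ b # replicate m a" "adj a b"
  using assms sierpinski_adj_iff[of x n y adj] unfolding sierpinski_verts_def by blast

section \<open>Decomposing words as w a b^m\<close>

lemma replicate_append_Cons_inj:
  "a \<noteq> b \<Longrightarrow> a' \<noteq> b \<Longrightarrow> replicate m b @ a # xs = replicate m' b @ a' # ys \<Longrightarrow>
    m = m' \<and> a = a' \<and> xs = ys"
proof (induction m arbitrary: m')
  case 0 then show ?case by (cases m') auto
next
  case (Suc m) then show ?case by (cases m') auto
qed

lemma append_Cons_replicate_inj:
  assumes "a \<noteq> b" "a' \<noteq> b'" "1 \<le> m" "1 \<le> m'"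
    and eq: "w @ a # replicate m b = w' @ a' # replicate m' b'"
  shows "w = w' \<and> a = a' \<and> m = m' \<and> b = b'"
proof -
  have "b = b'"
    using arg_cong[OF eq, of last] assms(3,4) by (simp add: last_append)
  have "replicate m b @ a # rev w = replicate m' b @ a' # rev w'"
    using arg_cong[OF eq, of rev] \<open>b = b'\<close> by simp
  moreover have "a' \<noteq> b"
    using assms(2) \<open>b = b'\<close> by simp
  ultimately have "m = m' \<and> a = a' \<and> rev w = rev w'"
    using replicate_append_Cons_inj[OF assms(1)] by blast
  with \<open>b = b'\<close> show ?thesis
    by simp
qed

lemma snoc_eq_append_Cons_replicate:
  assumes "w @ [a] = w' @ a' # replicate m b" "1 \<le> m"
  shows "a = b \<and> w = w' @ a' # replicate (m - 1) b"
proof -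
  obtain k where "m = Suc k"
    using assms(2) by (cases m) auto
  then have "w @ [a] = (w' @ a' # replicate k b) @ [b]"
    using assms(1) by (simp add: replicate_append_same[symmetric])
  then show ?thesis
    using \<open>m = Suc k\<close> by simp
qed

lemma append_Cons_replicate_pair_inj:
  assumes "a \<noteq> b" "a' \<noteq> b'"
    "w @ a # replicate m b = w' @ a' # replicate m' b'"
    "w @ b # replicate m a = w' @ b' # replicate m' a'"
  shows "w = w' \<and> a = a' \<and> b = b' \<and> m = m'"
proof -
  have len: "length w + m = length w' + m'"
    using arg_cong[OF assms(3), of length] by simp
  have "length w = length w'"
  proof (rule ccontr)
    assume "length w \<noteq> length w'"
    then consider "length w < length w'" | "length w' < length w" by linarith
    then show False
    proof cases
      case 1
      have "a = w' ! length w"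
        using arg_cong[OF assms(3), of "\<lambda>l. l ! length w"] 1 by (simp add: nth_append)
      moreover have "b = w' ! length w"
        using arg_cong[OF assms(4), of "\<lambda>l. l ! length w"] 1 by (simp add: nth_append)
      ultimately show False
        using assms(1) by simp
    next
      case 2
      have "a' = w ! length w'"
        using arg_cong[OF assms(3), of "\<lambda>l. l ! length w'"] 2 by (simp add: nth_append)
      moreover have "b' = w ! length w'"
        using arg_cong[OF assms(4), of "\<lambda>l. l ! length w'"] 2 by (simp add: nth_append)
      ultimately show False
        using assms(2) by simp
    qed
  qed
  then have "w = w'" "a # replicate m b = a' # replicate m' b'" "b # replicate m a = b' # replicate m' a'"
    using assms(3,4) by auto
  then show ?thesis
    using len \<open>length w = length w'\<close> by auto
qed

section \<open>Injective edge colourings of a hexagon\<close>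

lemma inj_edge_coloring_hexagon:
  assumes col: "inj_edge_coloring V adj c k"
    and "distinct [v0, v1, v2, v3, v4, v5]" "{v0, v1, v2, v3, v4, v5} \<subseteq> V"
    and "adj v0 v1" "adj v1 v2" "adj v2 v3" "adj v3 v4" "adj v4 v5" "adj v5 v0"
  shows "3 \<le> k"
proof -
  have range: "c {x, y} \<in> {1..k}" if "x \<in> V" "y \<in> V" "adj x y" for x y
    using col that unfolding inj_edge_coloring_def by blast
  have sep: "c {x, y} \<noteq> c {z, u}"
    if "x \<in> V" "y \<in> V" "z \<in> V" "u \<in> V" "adj x y" "adj y z" "adj z u"
      "x \<noteq> y" "y \<noteq> z" "x \<noteq> z" "u \<noteq> y" "u \<noteq> z" for x y z u
    using col that unfolding inj_edge_coloring_def by blast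
  have "c {v0, v1} \<noteq> c {v2, v3}" "c {v2, v3} \<noteq> c {v4, v5}" "c {v4, v5} \<noteq> c {v0, v1}"
    by (rule sep; use assms(2-) in auto)+
  moreover have "c {v0, v1} \<in> {1..k}" "c {v2, v3} \<in> {1..k}" "c {v4, v5} \<in> {1..k}"
    by (rule range; use assms(3-) in auto)+
  ultimately show ?thesis
    by auto
qed

definition odd_end :: "nat \<Rightarrow> nat \<Rightarrow> nat" where
  "odd_end a b = (if odd a then a else b)"

text \<open>Row c is the colouring of a copy whose address ends with c, indexed by the odd end 1, 3, 5
  of the edge (every edge of C6 has exactly one). It gives colour 2 to the two edges at the odd one
  of c and (c + 3) mod 6.\<close>

definition inner_colour :: "nat \<Rightarrow> nat \<Rightarrow> nat" where
  "inner_colour c p = [[1,2,3],[2,1,3],[3,1,2],[3,2,1],[2,3,1],[1,3,2::nat]] ! c ! (p div 2)"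

text \<open>Alternates between 1 and 3 around C6: it is decided by the parity of the end of the edge
  that comes first in the cyclic order.\<close>

definition bridge_colour :: "nat \<Rightarrow> nat \<Rightarrow> nat" where
  "bridge_colour a b = (if even (if b = Suc a mod 6 then a else b) then 1 else 3)"

text \<open>edge_colour w a b m colours the edge {w a b^m, w b a^m}; last (0 # w) is the last letter of
  w, or 0 when w is empty.\<close>

definition edge_colour :: "nat list \<Rightarrow> nat \<Rightarrow> nat \<Rightarrow> nat \<Rightarrow> nat" where
  "edge_colour w a b m =
    (if m = 0 then inner_colour (last (0 # w)) (odd_end a b) else if m = 1 then bridge_colour a b else 2)"

definition sierpinski_colouring :: "nat list set \<Rightarrow> nat" where
  "sierpinski_colouring e = (SOME k. \<exists>w a b m.
     e = {w @ a # replicate m b, w @ b # replicate m a} \<and> C6_adj a b \<and> k = edge_colour w a b m)"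

section \<open>Finite facts about C6\<close>

text \<open>The finite checks below quantify over neighbours rather than over all vertices, which keeps
  the enumerations small enough for the simplifier.\<close>

definition C6_neighbours :: "nat \<Rightarrow> nat set" where
  "C6_neighbours a = {(a + 1) mod 6, (a + 5) mod 6}"

lemma less_6_iff: "(x::nat) < 6 \<longleftrightarrow> x \<in> {0,1,2,3,4,5}"
  by auto

lemma C6_adjD: "C6_adj a b \<Longrightarrow> a < 6 \<and> b \<in> C6_neighbours a"
  unfolding C6_adj_def C6_neighbours_def by (auto simp: less_6_iff)

lemma C6_adj_sym: "C6_adj a b \<Longrightarrow> C6_adj b a"
  unfolding C6_adj_def by auto

lemma C6_adj_neq: "C6_adj a b \<Longrightarrow> a \<noteq> b"
  unfolding C6_adj_def by (auto simp: mod_Suc split: if_splits)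

lemma C6_triangle_free:
  assumes "C6_adj a b" "C6_adj b c"
  shows "\<not> C6_adj a c"
proof -
  have "\<forall>a<6. \<forall>b\<in>C6_neighbours a. \<forall>c\<in>C6_neighbours b. c \<notin> C6_neighbours a"
    unfolding less_6_iff C6_neighbours_def by simp
  then show ?thesis
    using C6_adjD[OF assms(1)] C6_adjD[OF assms(2)] C6_adjD[of a c] by blast
qed

lemma odd_end_commute:
  assumes "C6_adj a b"
  shows "odd_end a b = odd_end b a"
proof -
  have "\<forall>a<6. \<forall>b\<in>C6_neighbours a. odd_end a b = odd_end b a"
    unfolding less_6_iff C6_neighbours_def by (simp add: odd_end_def)
  then show ?thesis
    using C6_adjD[OF assms] by blast
qed

lemma bridge_colour_commute:
  assumes "C6_adj a b"
  shows "bridge_colour a b = bridge_colour b a"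
proof -
  have "\<forall>a<6. \<forall>b\<in>C6_neighbours a. bridge_colour a b = bridge_colour b a"
    unfolding less_6_iff C6_neighbours_def by (simp add: bridge_colour_def)
  then show ?thesis
    using C6_adjD[OF assms] by blast
qed

lemma edge_colour_commute:
  assumes "C6_adj a b"
  shows "edge_colour w a b m = edge_colour w b a m"
  unfolding edge_colour_def using odd_end_commute[OF assms] bridge_colour_commute[OF assms] by simp

lemma edge_colour_range:
  assumes "C6_adj a b" "last (0 # w) < 6"
  shows "edge_colour w a b m \<in> {1..3}"
proof -
  have "\<forall>c<6. \<forall>a<6. \<forall>b\<in>C6_neighbours a.
      inner_colour c (odd_end a b) \<in> {1..3} \<and> bridge_colour a b \<in> {1..3}"
    unfolding less_6_iff C6_neighbours_def
    by (simp add: inner_colour_def odd_end_def bridge_colour_def)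
  then show ?thesis
    using C6_adjD[OF assms(1)] assms(2) unfolding edge_colour_def by auto
qed

lemma inner_colour_path:
  assumes "C6_adj a1 a2" "C6_adj a2 b2" "C6_adj b2 b3" "a1 \<noteq> b2" "b3 \<noteq> a2" "c < 6"
  shows "inner_colour c (odd_end a1 a2) \<noteq> inner_colour c (odd_end b2 b3)"
proof -
  have "\<forall>c<6. \<forall>a1<6. \<forall>a2\<in>C6_neighbours a1. \<forall>b2\<in>C6_neighbours a2. \<forall>b3\<in>C6_neighbours b2.
      a1 \<noteq> b2 \<longrightarrow> b3 \<noteq> a2 \<longrightarrow> inner_colour c (odd_end a1 a2) \<noteq> inner_colour c (odd_end b2 b3)"
    unfolding less_6_iff C6_neighbours_def by (simp add: inner_colour_def odd_end_def)
  then show ?thesis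
    using C6_adjD[OF assms(1)] C6_adjD[OF assms(2)] C6_adjD[OF assms(3)] assms(4-6) by blast
qed

lemma inner_colour_neq_2:
  assumes "C6_adj a1 a2" "C6_adj a2 b2" "a1 \<noteq> b2"
  shows "inner_colour b2 (odd_end a1 a2) \<noteq> 2"
proof -
  have "\<forall>a1<6. \<forall>a2\<in>C6_neighbours a1. \<forall>b2\<in>C6_neighbours a2.
      a1 \<noteq> b2 \<longrightarrow> inner_colour b2 (odd_end a1 a2) \<noteq> 2"
    unfolding less_6_iff C6_neighbours_def by (simp add: inner_colour_def odd_end_def)
  then show ?thesis
    using C6_adjD[OF assms(1)] C6_adjD[OF assms(2)] assms(3) by blast
qed

lemma inner_colour_neq_bridge_colour:
  assumes "C6_adj a1 a2" "C6_adj a2 b2" "C6_adj b2 c" "a1 \<noteq> b2"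
  shows "inner_colour c (odd_end a1 a2) \<noteq> bridge_colour c b2"
proof -
  have "\<forall>a1<6. \<forall>a2\<in>C6_neighbours a1. \<forall>b2\<in>C6_neighbours a2. \<forall>c\<in>C6_neighbours b2.
      a1 \<noteq> b2 \<longrightarrow> inner_colour c (odd_end a1 a2) \<noteq> bridge_colour c b2"
    unfolding less_6_iff C6_neighbours_def by (simp add: inner_colour_def odd_end_def bridge_colour_def)
  then show ?thesis
    using C6_adjD[OF assms(1)] C6_adjD[OF assms(2)] C6_adjD[OF assms(3)] assms(4) by blast
qed

lemma inner_colour_across_bridge:
  assumes "C6_adj a b" "C6_adj b a'" "C6_adj a b'"
  shows "inner_colour a (odd_end a' b) \<noteq> inner_colour b (odd_end a b') \<and>
    inner_colour b (odd_end a' b) \<noteq> inner_colour a (odd_end a b')"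
proof -
  have "\<forall>a<6. \<forall>b\<in>C6_neighbours a. \<forall>a'\<in>C6_neighbours b. \<forall>b'\<in>C6_neighbours a.
      inner_colour a (odd_end a' b) \<noteq> inner_colour b (odd_end a b') \<and>
      inner_colour b (odd_end a' b) \<noteq> inner_colour a (odd_end a b')"
    unfolding less_6_iff C6_neighbours_def by (simp add: inner_colour_def odd_end_def)
  then show ?thesis
    using C6_adjD[OF assms(1)] C6_adjD[OF assms(2)] C6_adjD[OF assms(3)] by blast
qed

lemma sierpinski_colouring_eq:
  assumes "C6_adj a b"
  shows "sierpinski_colouring {w @ a # replicate m b, w @ b # replicate m a} = edge_colour w a b m"
  unfolding sierpinski_colouring_def
proof (rule some_equality)
  show "\<exists>w' a' b' m'. {w @ a # replicate m b, w @ b # replicate m a} =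
      {w' @ a' # replicate m' b', w' @ b' # replicate m' a'} \<and> C6_adj a' b' \<and>
      edge_colour w a b m = edge_colour w' a' b' m'"
    using assms by blast
next
  fix k
  assume "\<exists>w' a' b' m'. {w @ a # replicate m b, w @ b # replicate m a} =
      {w' @ a' # replicate m' b', w' @ b' # replicate m' a'} \<and> C6_adj a' b' \<and> k = edge_colour w' a' b' m'"
  then obtain w' a' b' m' where eq: "{w @ a # replicate m b, w @ b # replicate m a} =
      {w' @ a' # replicate m' b', w' @ b' # replicate m' a'}"
    and "C6_adj a' b'" and k: "k = edge_colour w' a' b' m'"
    by blast
  have "a \<noteq> b" "a' \<noteq> b'"
    using assms \<open>C6_adj a' b'\<close> by (simp_all add: C6_adj_neq)
  from eq consider
    "w @ a # replicate m b = w' @ a' # replicate m' b'" "w @ b # replicate m a = w' @ b' # replicate m' a'"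
    | "w @ a # replicate m b = w' @ b' # replicate m' a'" "w @ b # replicate m a = w' @ a' # replicate m' b'"
    by (auto simp: doubleton_eq_iff)
  then show "k = edge_colour w a b m"
  proof cases
    case 1
    then show ?thesis
      using append_Cons_replicate_pair_inj[OF \<open>a \<noteq> b\<close> \<open>a' \<noteq> b'\<close> 1] k by simp
  next
    case 2
    then have "w = w' \<and> a = b' \<and> b = a' \<and> m = m'"
      using append_Cons_replicate_pair_inj[OF \<open>a \<noteq> b\<close> _ 2] \<open>a' \<noteq> b'\<close> by auto
    then show ?thesis
      using k edge_colour_commute[OF assms] by simp
  qed
qed

lemma bridge_colour_neq_2: "bridge_colour a b \<noteq> 2"
  unfolding bridge_colour_def by simp

lemma edge_colour_separates_from_inner:
  assumes "C6_adj a1 a2" "C6_adj a2 b2" "C6_adj a3 b3" "a1 \<noteq> b2"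
    and z: "w @ [b2] = w3 @ a3 # replicate m3 b3"
    and u: "w3 @ b3 # replicate m3 a3 \<noteq> w @ [a2]"
    and "last (0 # w) < 6"
  shows "edge_colour w a1 a2 0 \<noteq> edge_colour w3 a3 b3 m3"
proof (cases "m3 = 0")
  case True
  then have "w3 = w" "a3 = b2" "b3 \<noteq> a2"
    using z u by auto
  then show ?thesis
    using inner_colour_path[OF assms(1,2) _ assms(4) _ assms(7)] assms(3) True
    by (simp add: edge_colour_def)
next
  case False
  then have "b2 = b3" and w: "w = w3 @ a3 # replicate (m3 - 1) b3"
    using snoc_eq_append_Cons_replicate[OF z] by auto
  show ?thesis
  proof (cases "m3 = 1")
    case True
    have "C6_adj b2 a3"
      using assms(3) \<open>b2 = b3\<close> by (simp add: C6_adj_sym)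
    then show ?thesis
      using inner_colour_neq_bridge_colour[OF assms(1,2) _ assms(4)] w True \<open>b2 = b3\<close>
      by (simp add: edge_colour_def)
  next
    case False
    then show ?thesis
      using inner_colour_neq_2[OF assms(1,2,4)] w \<open>m3 \<noteq> 0\<close> \<open>b2 = b3\<close>
      by (simp add: edge_colour_def last_append)
  qed
qed

lemma edge_colour_separates_bridges:
  assumes "C6_adj a1 b1" "C6_adj a2 b2" "C6_adj a3 b3" "1 \<le> m1" "1 \<le> m3"
    and y: "w1 @ b1 # replicate m1 a1 = w @ [a2]"
    and z: "w @ [b2] = w3 @ a3 # replicate m3 b3"
  shows "edge_colour w1 a1 b1 m1 \<noteq> edge_colour w3 a3 b3 m3"
proof -
  have "a2 = a1" and w1: "w = w1 @ b1 # replicate (m1 - 1) a1"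
    using snoc_eq_append_Cons_replicate[OF y[symmetric] assms(4)] by auto
  have "b2 = b3" and w3: "w = w3 @ a3 # replicate (m3 - 1) b3"
    using snoc_eq_append_Cons_replicate[OF z assms(5)] by auto
  consider "m1 = 1" "m3 = 1" | "m1 = 1 \<longleftrightarrow> m3 \<noteq> 1" | "2 \<le> m1" "2 \<le> m3"
    using assms(4,5) by linarith
  then show ?thesis
  proof cases
    case 1
    then have "b1 = a3"
      using w1 w3 by simp
    then show ?thesis
      using C6_triangle_free[OF C6_adj_sym[OF assms(1)]] assms(2,3) \<open>a2 = a1\<close> \<open>b2 = b3\<close> by simp
  next
    case 2
    then show ?thesis
      using assms(4,5) bridge_colour_neq_2 by (auto simp: edge_colour_def)
  next
    case 3
    have "b1 \<noteq> a1" "a3 \<noteq> b3"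
      using assms(1,3) C6_adj_neq by auto
    then have "a1 = b3"
      using append_Cons_replicate_inj[of b1 a1 a3 b3 "m1 - 1" "m3 - 1" w1 w3] w1 w3 3 by auto
    then show ?thesis
      using C6_adj_neq[OF assms(2)] \<open>a2 = a1\<close> \<open>b2 = b3\<close> by simp
  qed
qed

lemma edge_colour_separates_across_bridge:
  assumes "C6_adj a1 b1" "C6_adj a2 b2" "C6_adj a3 b3" "1 \<le> m2"
    and y: "w1 @ b1 # replicate m1 a1 = w2 @ a2 # replicate m2 b2"
    and z: "w2 @ b2 # replicate m2 a2 = w3 @ a3 # replicate m3 b3"
    and x_neq_z: "w1 @ a1 # replicate m1 b1 \<noteq> w2 @ b2 # replicate m2 a2"
    and u_neq_y: "w3 @ b3 # replicate m3 a3 \<noteq> w2 @ a2 # replicate m2 b2"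
  shows "edge_colour w1 a1 b1 m1 \<noteq> edge_colour w3 a3 b3 m3"
proof -
  \<comment> \<open>An end of a bridge has no other bridge, so both outer edges lie inside copies.\<close>
  have neq: "a1 \<noteq> b1" "a2 \<noteq> b2" "a3 \<noteq> b3"
    using assms(1-3) C6_adj_neq by auto
  have "m1 = 0"
  proof (rule ccontr)
    assume "m1 \<noteq> 0"
    then have "w1 = w2 \<and> b1 = a2 \<and> m1 = m2 \<and> a1 = b2"
      using append_Cons_replicate_inj[of b1 a1 a2 b2 m1 m2 w1 w2] neq y assms(4) by auto
    with x_neq_z show False by simp
  qed
  have "m3 = 0"
  proof (rule ccontr)
    assume "m3 \<noteq> 0"
    then have "w3 = w2 \<and> a3 = b2 \<and> m3 = m2 \<and> b3 = a2"
      using append_Cons_replicate_inj[of a3 b3 b2 a2 m3 m2 w3 w2] neq z assms(4) by auto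
    with u_neq_y show False by simp
  qed
  have "b1 = b2" and w1: "w1 = w2 @ a2 # replicate (m2 - 1) b2"
    using snoc_eq_append_Cons_replicate[of w1 b1 w2 a2 m2 b2] y \<open>m1 = 0\<close> assms(4) by auto
  have "a3 = a2" and w3: "w3 = w2 @ b2 # replicate (m2 - 1) a2"
    using snoc_eq_append_Cons_replicate[of w3 a3 w2 b2 m2 a2] z \<open>m3 = 0\<close> assms(4) by auto
  have "C6_adj b2 a1" "C6_adj a2 b3"
    using assms(1,3) \<open>b1 = b2\<close> \<open>a3 = a2\<close> by (simp_all add: C6_adj_sym)
  then show ?thesis
    using inner_colour_across_bridge[OF assms(2)] w1 w3 \<open>m1 = 0\<close> \<open>m3 = 0\<close> \<open>b1 = b2\<close> \<open>a3 = a2\<close>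
    by (cases "m2 = 1") (simp_all add: edge_colour_def last_append)
qed

lemma edge_colour_separates:
  assumes "C6_adj a1 b1" "C6_adj a2 b2" "C6_adj a3 b3"
    and y: "w1 @ b1 # replicate m1 a1 = w2 @ a2 # replicate m2 b2"
    and z: "w2 @ b2 # replicate m2 a2 = w3 @ a3 # replicate m3 b3"
    and x_neq_z: "w1 @ a1 # replicate m1 b1 \<noteq> w2 @ b2 # replicate m2 a2"
    and u_neq_y: "w3 @ b3 # replicate m3 a3 \<noteq> w2 @ a2 # replicate m2 b2"
    and "last (0 # w2) < 6"
  shows "edge_colour w1 a1 b1 m1 \<noteq> edge_colour w3 a3 b3 m3"
proof (cases "m2 = 0")
  case True
  consider "m1 = 0" | "m3 = 0" | "1 \<le> m1" "1 \<le> m3"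
    by linarith
  then show ?thesis
  proof cases
    case 1
    then have "w1 = w2" "b1 = a2" "a1 \<noteq> b2"
      using y x_neq_z \<open>m2 = 0\<close> by auto
    then show ?thesis
      using edge_colour_separates_from_inner[of a1 a2 b2 a3 b3 w2 w3 m3] assms(1-3,8) z u_neq_y 1 True
      by simp
  next
    case 2
    \<comment> \<open>Reverse the path and use the previous case.\<close>
    then have "w3 = w2" "a3 = b2" "b3 \<noteq> a2"
      using z u_neq_y \<open>m2 = 0\<close> by auto
    then have "edge_colour w2 b3 b2 0 \<noteq> edge_colour w1 b1 a1 m1"
      using edge_colour_separates_from_inner[of b3 b2 a2 b1 a1 w2 w1 m1] assms(1-3,8) y x_neq_z True
      by (simp add: C6_adj_sym)
    then show ?thesis
      using edge_colour_commute assms(1,3) 2 \<open>w3 = w2\<close> \<open>a3 = b2\<close> by metis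
  next
    case 3
    then show ?thesis
      using edge_colour_separates_bridges[OF assms(1-3) 3] y z True by simp
  qed
next
  case False
  then show ?thesis
    using edge_colour_separates_across_bridge[OF assms(1-3) _ y z x_neq_z u_neq_y] by simp
qed

lemma last_Cons_0_less_6:
  assumes "w @ v \<in> sierpinski_verts C6_verts n"
  shows "last (0 # w) < 6"
  using assms unfolding sierpinski_verts_def C6_verts_def by (cases w rule: rev_cases) auto

lemma inj_edge_coloring_sierpinski_colouring:
  "inj_edge_coloring (sierpinski_verts C6_verts n) (sierpinski_adj C6_adj n) sierpinski_colouring 3"
  unfolding inj_edge_coloring_def
proof (intro conjI ballI impI)
  fix x y
  assume V: "x \<in> sierpinski_verts C6_verts n" "y \<in> sierpinski_verts C6_verts n"
    and "sierpinski_adj C6_adj n x y"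
  then obtain w a b m where x: "x = w @ a # replicate m b" and y: "y = w @ b # replicate m a"
    and "C6_adj a b"
    by (elim sierpinski_adjE)
  then show "sierpinski_colouring {x, y} \<in> {1..3}"
    using sierpinski_colouring_eq edge_colour_range last_Cons_0_less_6 V(1) by simp
next
  fix x y z u
  assume V: "x \<in> sierpinski_verts C6_verts n" "y \<in> sierpinski_verts C6_verts n"
      "z \<in> sierpinski_verts C6_verts n" "u \<in> sierpinski_verts C6_verts n"
    and path: "sierpinski_adj C6_adj n x y \<and> sierpinski_adj C6_adj n y z \<and> sierpinski_adj C6_adj n z u \<and>
      x \<noteq> y \<and> y \<noteq> z \<and> x \<noteq> z \<and> u \<noteq> y \<and> u \<noteq> z"
  from path have "sierpinski_adj C6_adj n x y" "sierpinski_adj C6_adj n y z" "sierpinski_adj C6_adj n z u"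
    by simp_all
  then obtain w1 a1 b1 m1 w2 a2 b2 m2 w3 a3 b3 m3 where
      x: "x = w1 @ a1 # replicate m1 b1" and y1: "y = w1 @ b1 # replicate m1 a1" and "C6_adj a1 b1"
    and y2: "y = w2 @ a2 # replicate m2 b2" and z2: "z = w2 @ b2 # replicate m2 a2" and "C6_adj a2 b2"
    and z3: "z = w3 @ a3 # replicate m3 b3" and u: "u = w3 @ b3 # replicate m3 a3" and "C6_adj a3 b3"
    using V by (metis sierpinski_adjE)
  have "last (0 # w2) < 6"
    using last_Cons_0_less_6 V(2) y2 by blast
  moreover have "w1 @ b1 # replicate m1 a1 = w2 @ a2 # replicate m2 b2"
    "w2 @ b2 # replicate m2 a2 = w3 @ a3 # replicate m3 b3"
    "w1 @ a1 # replicate m1 b1 \<noteq> w2 @ b2 # replicate m2 a2"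
    "w3 @ b3 # replicate m3 a3 \<noteq> w2 @ a2 # replicate m2 b2"
    using x y1 y2 z2 z3 u path by simp_all
  ultimately have "edge_colour w1 a1 b1 m1 \<noteq> edge_colour w3 a3 b3 m3"
    using edge_colour_separates[OF \<open>C6_adj a1 b1\<close> \<open>C6_adj a2 b2\<close> \<open>C6_adj a3 b3\<close>] by blast
  then show "sierpinski_colouring {x, y} \<noteq> sierpinski_colouring {z, u}"
    using sierpinski_colouring_eq \<open>C6_adj a1 b1\<close> \<open>C6_adj a3 b3\<close> x y1 z3 u by simp
qed

lemma sierpinski_C6_inj_colours_ge_3:
  assumes "1 \<le> n" "inj_edge_coloring (sierpinski_verts C6_verts n) (sierpinski_adj C6_adj n) c k"
  shows "3 \<le> k"
proof -
  define v where "v i = replicate (n - 1) 0 @ [i]" for i :: nat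
  have V: "v i \<in> sierpinski_verts C6_verts n" if "i < 6" for i
    using that assms(1) unfolding v_def sierpinski_verts_def C6_verts_def by auto
  have E: "sierpinski_adj C6_adj n (v i) (v j)" if "C6_adj i j" for i j
    unfolding v_def using assms(1) that by (intro sierpinski_adj_snoc) auto
  have "distinct [v 0, v 1, v 2, v 3, v 4, v 5]"
    by (simp add: v_def)
  moreover have "{v 0, v 1, v 2, v 3, v 4, v 5} \<subseteq> sierpinski_verts C6_verts n"
    using V by simp
  moreover have "sierpinski_adj C6_adj n (v 0) (v 1)" "sierpinski_adj C6_adj n (v 1) (v 2)"
    "sierpinski_adj C6_adj n (v 2) (v 3)" "sierpinski_adj C6_adj n (v 3) (v 4)"
    "sierpinski_adj C6_adj n (v 4) (v 5)" "sierpinski_adj C6_adj n (v 5) (v 0)"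
    using E[of 0 1] E[of 1 2] E[of 2 3] E[of 3 4] E[of 4 5] E[of 5 0] by (simp_all add: C6_adj_def)
  ultimately show ?thesis
    by (rule inj_edge_coloring_hexagon[OF assms(2)])
qed

theorem mainTheorem9:
  fixes n :: nat
  assumes "n \<ge> 1"
  shows "inj_chromatic_index (sierpinski_verts C6_verts n) (sierpinski_adj C6_adj n) = 3"
  unfolding inj_chromatic_index_def
  using inj_edge_coloring_sierpinski_colouring sierpinski_C6_inj_colours_ge_3[OF assms]
  by (intro Least_equality) blast+

end
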